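(* Let $\alpha$ be an irrational Liouvillean number. Then there exists a mean-zero function $Q\in C^{\infty}(\mathbb{S}^1)$ such that the homology equation $$R(\xi+\alpha)-R(\xi)=Q(\xi)$$ has a measurable solution $R:\mathbb{S}^1\to\mathbb{R}$ with $R\in H^1(\mathbb{S}^1)$ but $R\notin H^2(\mathbb{S}^1)$. In addition, for every $\lambda\in\mathbb{R}\setminus\{0\}$, the function $R_\lambda(\xi)=e^{i\lambda R(\xi)}$ belongs to $H^1(\mathbb{S}^1)$ but not to $H^2(\mathbb{S}^1)$.
   Context: $\mathbb{S}^1=[-\tfrac12,\tfrac12]$ with endpoints identified (the one-dimensional circle), addition taken mod 1. A real number $\alpha$ is $\beta$-Diophantine if there is a constant $C>0$ with $\inf_{p\in\mathbb{Z}}|\alpha k+p|\geq C/|k|^{1+\beta}$ for all $k\in\mathbb{Z}\setminus\{0\}$; $\alpha$ is Liouvillean if it is not $\beta$-Diophantine for any $\beta>0$. *)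

theory Defs
  imports "HOL-Analysis.Analysis"
begin

text \<open>The circle S^1 = R/Z; functions on S^1 are 1-periodic functions on R.\<close>

definition periodic1 :: "(real \<Rightarrow> 'a) \<Rightarrow> bool" where
  "periodic1 f \<longleftrightarrow> (\<forall>x. f (x + 1) = f x)"

definition diophantine :: "real \<Rightarrow> real \<Rightarrow> bool" where
  "diophantine \<alpha> \<beta> \<longleftrightarrow>
     (\<exists>C>0. \<forall>k::int. k \<noteq> 0 \<longrightarrow>
        (INF p::int. \<bar>\<alpha> * of_int k + of_int p\<bar>) \<ge> C / (real_of_int \<bar>k\<bar>) powr (1 + \<beta>))"

definition liouvillean :: "real \<Rightarrow> bool" where
  "liouvillean \<alpha> \<longleftrightarrow> \<not> (\<exists>\<beta>>0. diophantine \<alpha> \<beta>)"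

definition smooth_circle :: "(real \<Rightarrow> real) \<Rightarrow> bool" where
  "smooth_circle f \<longleftrightarrow> periodic1 f \<and>
     (\<exists>D :: nat \<Rightarrow> real \<Rightarrow> real. D 0 = f \<and>
        (\<forall>n x. (D n has_real_derivative D (Suc n) x) (at x)))"

definition mean_zero :: "(real \<Rightarrow> real) \<Rightarrow> bool" where
  "mean_zero f \<longleftrightarrow> (LINT x:{0..1}|lborel. f x) = 0"

definition fourier_coeff :: "(real \<Rightarrow> complex) \<Rightarrow> int \<Rightarrow> complex" where
  "fourier_coeff f k =
     (LINT x:{0..1}|lborel. f x * exp (- (2 * of_real pi * \<i> * of_int k * of_real x)))"

definition sobolev :: "nat \<Rightarrow> (real \<Rightarrow> complex) \<Rightarrow> bool" where
  "sobolev s f \<longleftrightarrow> periodic1 f \<and> f \<in> borel_measurable lborel \<and>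
     set_integrable lborel {0..1} (\<lambda>x. (norm (f x))\<^sup>2) \<and>
     (\<lambda>k::int. (1 + (real_of_int k)\<^sup>2) ^ s * (norm (fourier_coeff f k))\<^sup>2) summable_on UNIV"

end

theory Submission
  imports Defs
begin

(* Choose denominators q_j, growing at least geometrically, with |q_j alpha + p_j| < q_j^(-j) for
   integers p_j (possible as alpha is Liouvillean), and let R x = sum_j cos (2 pi q_j x) / q_j^2.
   The j-th term of the n-th derivative of Q x = R (x + alpha) - R x is O(q_j^(n - j - 2)), so Q is
   smooth; R is C^1 and hence in H^1. The Fourier coefficient of R' at q_j has modulus pi / q_j, so
   sum_k k^2 |c_k(R')|^2 diverges and R is not in H^2. If exp (i l R) were in H^2, its derivative
   a = i l R' exp (i l R) would have L^2 modulus of continuity O(h) by Parseval's identity, hence so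
   would R' = a exp (-i l R) / (i l), which would make sum_k k^2 |c_k(R')|^2 finite after all.
   Parseval's identity comes from the uniform density of trigonometric polynomials, which is
   Stone-Weierstrass on the unit circle. *)

section \<open>Periodic functions and the characters of the circle\<close>

lemma periodic1_of_int: "periodic1 f \<Longrightarrow> f (x + of_int n) = f x"
proof -
  have nat: "f (x + of_nat m) = f x" if "periodic1 f" for x m
    using that by (induction m arbitrary: x) (simp_all add: periodic1_def flip: add.assoc)
  assume "periodic1 f"
  then show ?thesis
    using nat[of "x + of_int n" "nat (- n)"] nat[of x "nat n"] by (cases "0 \<le> n") simp_all
qed

lemma periodic1_frac: "periodic1 f \<Longrightarrow> f (frac x) = f x"
  using periodic1_of_int[of f "frac x" "\<lfloor>x\<rfloor>"] by (simp add: frac_def)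

lemma integral_periodic1_shift:
  fixes w :: "real \<Rightarrow> 'a::euclidean_space"
  assumes cont: "continuous_on UNIV w" and per: "periodic1 w"
  shows "integral {0..1} (\<lambda>x. w (x + h)) = integral {0..1} w"
proof -
  have int: "w integrable_on {a..b}" for a b
    by (rule integrable_continuous_real) (use cont continuous_on_subset in blast)
  define t where "t = frac h"
  have t: "0 \<le> t" "t \<le> 1" unfolding t_def by (auto intro: less_imp_le frac_lt_1)
  have shift: "integral {a..b} (\<lambda>x. w (x + c)) = integral {a + c..b + c} w" for a b c
    using integral_shift_Icc_real[of a b w c] by (simp add: o_def add.commute)
  have "integral {0..1} (\<lambda>x. w (x + h)) = integral {0..1} (\<lambda>x. w (x + t))"
    using periodic1_of_int[OF per, of "_ + t" "\<lfloor>h\<rfloor>"] by (simp add: t_def frac_def)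
  also have "\<dots> = integral {t..1} w + integral {1..1 + t} w"
    using shift[of 0 1 t] int t
      Henstock_Kurzweil_Integration.integral_combine[where a = t and c = 1 and b = "1 + t" and f = w]
    by simp
  also have "integral {1..1 + t} w = integral {0..t} w"
    using shift[of 0 t 1] per by (simp add: periodic1_def add.commute)
  also have "integral {t..1} w + integral {0..t} w = integral {0..1} w"
    using Henstock_Kurzweil_Integration.integral_combine[where a = 0 and c = t and b = 1 and f = w]
      int t
    by (simp add: add.commute)
  finally show ?thesis .
qed

lemma periodic1_derivative:
  assumes u: "\<And>x. (u has_vector_derivative u' x) (at x)" and per: "periodic1 u"
  shows "periodic1 u'"
  unfolding periodic1_def
proof
  fix x :: real
  have "((\<lambda>x. x + 1) has_vector_derivative 1) (at x)"
    using has_vector_derivative_add[OF has_vector_derivative_id has_vector_derivative_const] by simp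
  then have "((u \<circ> (\<lambda>x. x + 1)) has_vector_derivative u' (x + 1)) (at x)"
    using vector_diff_chain_at[OF _ u] by fastforce
  moreover have "u \<circ> (\<lambda>x. x + 1) = u" using per by (simp add: periodic1_def fun_eq_iff)
  ultimately show "u' (x + 1) = u' x" using vector_derivative_unique_at[OF _ u] by simp
qed

definition circ_char :: "int \<Rightarrow> real \<Rightarrow> complex" where
  "circ_char k x = exp (2 * of_real pi * \<i> * of_int k * of_real x)"

lemma circ_char_add: "circ_char k (x + y) = circ_char k x * circ_char k y"
  unfolding circ_char_def by (simp add: algebra_simps flip: exp_add)

lemma circ_char_mult: "circ_char k x * circ_char l x = circ_char (k + l) x"
  unfolding circ_char_def by (simp add: algebra_simps flip: exp_add)

lemma circ_char_0 [simp]: "circ_char 0 x = 1" "circ_char k 0 = 1"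
  unfolding circ_char_def by simp_all

lemma circ_char_of_int [simp]: "circ_char k (of_int n) = 1"
  unfolding circ_char_def exp_eq_1 by (auto intro!: exI[of _ "k * n"] simp: algebra_simps)

lemma circ_char_1 [simp]: "circ_char k 1 = 1"
  using circ_char_of_int[of k 1] by simp

lemma circ_char_periodic [simp]: "circ_char k (x + 1) = circ_char k x"
  by (simp add: circ_char_add)

lemma periodic1_circ_char: "periodic1 (circ_char k)"
  by (simp add: periodic1_def)

lemma norm_circ_char [simp]: "norm (circ_char k x) = 1"
  unfolding circ_char_def by simp

lemma cnj_circ_char [simp]: "cnj (circ_char k x) = circ_char (-k) x"
  unfolding circ_char_def by (simp add: exp_cnj)

lemma circ_char_eq_cis: "circ_char k x = cis (2 * pi * of_int k * x)"
  unfolding circ_char_def cis_conv_exp by (simp add: algebra_simps)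

lemma has_vector_derivative_circ_char:
  "(circ_char k has_vector_derivative (2 * of_real pi * \<i> * of_int k) * circ_char k x)
     (at x within S)"
proof -
  have "((\<lambda>z. exp (2 * of_real pi * \<i> * of_int k * z)) has_field_derivative
          exp (2 * of_real pi * \<i> * of_int k * of_real x) * (2 * of_real pi * \<i> * of_int k))
          (at (of_real x))"
    by (auto intro!: derivative_eq_intros)
  from has_vector_derivative_real_field[OF this, of S] show ?thesis
    unfolding circ_char_def by (simp add: mult.commute)
qed

lemma continuous_on_circ_char [continuous_intros]:
  "continuous_on S f \<Longrightarrow> continuous_on S (\<lambda>x. circ_char k (f x))"
  unfolding circ_char_def by (intro continuous_intros)

lemma integral_circ_char: "integral {0..1} (circ_char m) = (if m = 0 then 1 else 0)"
proof (cases "m = 0")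
  case True
  then have "circ_char m = (\<lambda>x. 1)" by (simp add: fun_eq_iff)
  then show ?thesis using True by simp
next
  case False
  define c where "c = 2 * of_real pi * \<i> * of_int m"
  have "c \<noteq> 0" using False by (simp add: c_def)
  then have "((\<lambda>x. circ_char m x / c) has_vector_derivative circ_char m x) (at x within {0..1})" for x
    using has_vector_derivative_circ_char[of m x "{0..1}"]
    by (auto intro!: derivative_eq_intros simp: c_def)
  from fundamental_theorem_of_calculus[OF _ this] show ?thesis
    using False by (simp add: integral_unique)
qed

lemma sin_ge_half_self:
  fixes s :: real
  assumes "0 \<le> s" "s \<le> 1"
  shows "s / 2 \<le> sin s"
proof -
  have "(\<lambda>t. sin t - t / 2) 0 \<le> (\<lambda>t. sin t - t / 2) s"
  proof (rule DERIV_nonneg_imp_nondecreasing[OF assms(1)])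
    fix x assume x: "0 \<le> x" "x \<le> s"
    have "cos (pi / 3) \<le> cos x"
      using x assms pi_gt3 by (intro cos_monotone_0_pi_le) auto
    then have "1 / 2 \<le> cos x" by (simp add: cos_60)
    then show "\<exists>y. ((\<lambda>t. sin t - t / 2) has_real_derivative y) (at x) \<and> 0 \<le> y"
      by (intro exI[of _ "cos x - 1 / 2"]) (auto intro!: derivative_eq_intros)
  qed
  then show ?thesis by simp
qed

lemma norm_circ_char_minus_1: "cmod (circ_char k h - 1) = 2 * \<bar>sin (pi * of_int k * h)\<bar>"
  using dist_exp_i_1[of "2 * pi * of_int k * h"] unfolding circ_char_def by (simp add: algebra_simps)

lemma norm_circ_char_minus_1_le: "cmod (circ_char k h - 1) \<le> 2 * pi * \<bar>of_int k\<bar> * \<bar>h\<bar>"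
  unfolding norm_circ_char_minus_1
  using abs_sin_x_le_abs_x[of "pi * of_int k * h"] by (simp add: abs_mult)

lemma norm_circ_char_minus_1_ge:
  assumes "pi * \<bar>of_int k\<bar> * \<bar>h\<bar> \<le> 1"
  shows "pi * \<bar>of_int k\<bar> * \<bar>h\<bar> \<le> cmod (circ_char k h - 1)"
proof -
  define s where "s = pi * of_int k * h"
  have s1: "\<bar>s\<bar> \<le> 1" using assms unfolding s_def by (simp add: abs_mult)
  have "\<bar>s\<bar> / 2 \<le> \<bar>sin s\<bar>"
  proof (cases "0 \<le> s")
    case True
    then show ?thesis using sin_ge_half_self[of s] s1 by simp
  next
    case False
    then show ?thesis using sin_ge_half_self[of "- s"] s1 by simp
  qed
  then show ?thesis unfolding norm_circ_char_minus_1 s_def by (simp add: abs_mult)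
qed

section \<open>Fourier coefficients and trigonometric polynomials\<close>

(* The Henstock-Kurzweil integral version of fourier_coeff, which is easier to compute with. *)
definition fcoeff :: "(real \<Rightarrow> complex) \<Rightarrow> int \<Rightarrow> complex" where
  "fcoeff u k = integral {0..1} (\<lambda>x. u x * circ_char (-k) x)"

lemma fourier_coeff_eq_fcoeff:
  assumes "continuous_on {0..1} u"
  shows "fourier_coeff u k = fcoeff u k"
proof -
  have c: "continuous_on {0..1} (\<lambda>x. u x * circ_char (-k) x)"
    by (intro continuous_intros assms)
  have "set_integrable lborel {0..1} (\<lambda>x. u x * circ_char (-k) x)"
    unfolding set_integrable_def using borel_integrable_compact[OF _ c] by simp
  from set_borel_integral_eq_integral(2)[OF this] show ?thesis
    unfolding fourier_coeff_def fcoeff_def by (simp add: circ_char_def)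
qed

lemma fcoeff_diff:
  assumes "continuous_on {0..1} u" "continuous_on {0..1} v"
  shows "fcoeff (\<lambda>x. u x - v x) k = fcoeff u k - fcoeff v k"
  unfolding fcoeff_def using assms
  by (simp add: left_diff_distrib integral_diff integrable_continuous_real continuous_intros)

lemma fcoeff_shift:
  fixes u :: "real \<Rightarrow> complex"
  assumes u: "continuous_on UNIV u" "periodic1 u"
  shows "fcoeff (\<lambda>x. u (x + h)) k = circ_char k h * fcoeff u k"
proof -
  define w where "w y = u y * circ_char (-k) y" for y
  have w: "continuous_on UNIV w" "periodic1 w"
    using u unfolding w_def periodic1_def by (auto intro!: continuous_intros)
  have "circ_char k h * circ_char (-k) h = 1" by (simp add: circ_char_mult)
  then have "u (x + h) * circ_char (-k) x = circ_char k h * w (x + h)" for x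
    unfolding w_def circ_char_add by (simp add: mult_ac)
  then have "fcoeff (\<lambda>x. u (x + h)) k = circ_char k h * integral {0..1} (\<lambda>x. w (x + h))"
    unfolding fcoeff_def by simp
  also have "\<dots> = circ_char k h * fcoeff u k"
    by (simp only: integral_periodic1_shift[OF w]) (simp add: fcoeff_def w_def[abs_def])
  finally show ?thesis .
qed

lemma fcoeff_deriv:
  fixes u u' :: "real \<Rightarrow> complex"
  assumes u: "\<And>x. (u has_vector_derivative u' x) (at x)" and per: "periodic1 u"
  shows "fcoeff u' k = 2 * of_real pi * \<i> * of_int k * fcoeff u k"
proof -
  have cu: "continuous_on {0..1} u"
    using u by (meson continuous_at_imp_continuous_on has_vector_derivative_continuous)
  define c where "c = 2 * of_real pi * \<i> * of_int (-k)"
  have dchar: "(circ_char (-k) has_vector_derivative c * circ_char (-k) x) (at x)" for x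
    unfolding c_def by (rule has_vector_derivative_circ_char)
  have "((\<lambda>x. u x * (c * circ_char (-k) x)) has_integral c * fcoeff u k) {0..1}"
    unfolding fcoeff_def mult.left_commute[of _ c]
    by (intro has_integral_mult_right integrable_integral integrable_continuous_real
        continuous_intros cu)
  moreover have "u 1 = u 0" using per unfolding periodic1_def by (metis add_0)
  ultimately have "((\<lambda>x. u x * (c * circ_char (-k) x)) has_integral
      u 1 * circ_char (-k) 1 - u 0 * circ_char (-k) 0 - 2 * of_real pi * \<i> * of_int k * fcoeff u k)
      {0..1}"
    by (simp add: c_def)
  then have "((\<lambda>x. u' x * circ_char (-k) x) has_integral
      2 * of_real pi * \<i> * of_int k * fcoeff u k) {0..1}"
    by (intro integration_by_parts[OF bounded_bilinear_mult, where f = u and g = "circ_char (-k)"])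
       (auto intro: cu continuous_intros u dchar)
  then show ?thesis unfolding fcoeff_def by (rule integral_unique)
qed

lemma of_real_cmod_power2: "(complex_of_real (cmod z))\<^sup>2 = z * cnj z"
  using complex_norm_square[of z] by simp

lemma integral_cmod_sq:
  fixes u :: "real \<Rightarrow> complex"
  assumes "continuous_on {0..1} u"
  shows "complex_of_real (integral {0..1} (\<lambda>x. (cmod (u x))\<^sup>2)) = integral {0..1} (\<lambda>x. u x * cnj (u x))"
proof -
  have "((\<lambda>x. (cmod (u x))\<^sup>2) has_integral integral {0..1} (\<lambda>x. (cmod (u x))\<^sup>2)) {0..1}"
    by (intro integrable_integral integrable_continuous_real continuous_intros assms)
  from has_integral_of_real[where 'b=complex, OF this] show ?thesis
    by (simp add: of_real_cmod_power2 integral_unique)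
qed

definition trig_poly :: "int set \<Rightarrow> (int \<Rightarrow> complex) \<Rightarrow> real \<Rightarrow> complex" where
  "trig_poly K c x = (\<Sum>k\<in>K. c k * circ_char k x)"

lemma continuous_on_trig_poly [continuous_intros]: "continuous_on S (trig_poly K c)"
  unfolding trig_poly_def by (intro continuous_intros)

lemma integral_mult_cnj_trig_poly:
  assumes u: "continuous_on {0..1} u" and K: "finite K"
  shows "integral {0..1} (\<lambda>x. u x * cnj (trig_poly K c x)) = (\<Sum>k\<in>K. cnj (c k) * fcoeff u k)"
proof -
  have "integral {0..1} (\<lambda>x. u x * cnj (trig_poly K c x))
      = integral {0..1} (\<lambda>x. \<Sum>k\<in>K. cnj (c k) * (u x * circ_char (-k) x))"
    unfolding trig_poly_def by (simp add: sum_distrib_left mult_ac)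
  also have "\<dots> = (\<Sum>k\<in>K. cnj (c k) * fcoeff u k)"
    unfolding fcoeff_def using K u
    by (subst integral_sum) (auto intro!: integrable_continuous_real continuous_intros)
  finally show ?thesis .
qed

lemma fcoeff_trig_poly:
  assumes "finite K"
  shows "fcoeff (trig_poly K c) l = (if l \<in> K then c l else 0)"
proof -
  have "fcoeff (trig_poly K c) l = integral {0..1} (\<lambda>x. \<Sum>k\<in>K. c k * circ_char (k - l) x)"
    unfolding fcoeff_def trig_poly_def
    by (simp add: sum_distrib_right mult.assoc circ_char_mult)
  also have "\<dots> = (\<Sum>k\<in>K. c k * (if k = l then 1 else 0))"
    using assms
    by (subst integral_sum)
       (auto intro!: integrable_continuous_real continuous_intros simp: integral_circ_char)
  finally show ?thesis using assms by (simp add: if_distrib sum.delta' cong: if_cong)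
qed

lemma integral_cmod_sq_diff_trig_poly:
  fixes u :: "real \<Rightarrow> complex"
  assumes u: "continuous_on {0..1} u" and K: "finite K"
  shows "integral {0..1} (\<lambda>x. (cmod (u x - trig_poly K c x))\<^sup>2)
       = integral {0..1} (\<lambda>x. (cmod (u x))\<^sup>2) - (\<Sum>k\<in>K. (cmod (fcoeff u k))\<^sup>2)
         + (\<Sum>k\<in>K. (cmod (fcoeff u k - c k))\<^sup>2)"
proof -
  let ?p = "trig_poly K c"
  have int: "(\<lambda>x. f x * cnj (g x)) integrable_on {0..1}"
    if "continuous_on {0..1} f" "continuous_on {0..1} g" for f g :: "real \<Rightarrow> complex"
    by (intro integrable_continuous_real continuous_intros that)
  have cp: "continuous_on {0..1} ?p" by (intro continuous_intros)
  have up: "integral {0..1} (\<lambda>x. u x * cnj (?p x)) = (\<Sum>k\<in>K. cnj (c k) * fcoeff u k)"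
    by (rule integral_mult_cnj_trig_poly[OF u K])
  have pu: "integral {0..1} (\<lambda>x. ?p x * cnj (u x)) = (\<Sum>k\<in>K. c k * cnj (fcoeff u k))"
    using arg_cong[OF up, of cnj] by (simp add: Henstock_Kurzweil_Integration.integral_cnj mult.commute)
  have pp: "integral {0..1} (\<lambda>x. ?p x * cnj (?p x)) = (\<Sum>k\<in>K. c k * cnj (c k))"
    using integral_mult_cnj_trig_poly[OF cp K, of c] K
    by (simp add: fcoeff_trig_poly mult.commute)
  have "complex_of_real (integral {0..1} (\<lambda>x. (cmod (u x - ?p x))\<^sup>2))
      = integral {0..1} (\<lambda>x. (u x - ?p x) * cnj (u x - ?p x))"
    by (rule integral_cmod_sq) (intro continuous_intros u)
  also have "\<dots> = integral {0..1}
      (\<lambda>x. u x * cnj (u x) - u x * cnj (?p x) - ?p x * cnj (u x) + ?p x * cnj (?p x))"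
    by (rule arg_cong[where f = "integral _"]) (simp add: fun_eq_iff algebra_simps)
  also have "\<dots> = integral {0..1} (\<lambda>x. u x * cnj (u x)) - integral {0..1} (\<lambda>x. u x * cnj (?p x))
      - integral {0..1} (\<lambda>x. ?p x * cnj (u x)) + integral {0..1} (\<lambda>x. ?p x * cnj (?p x))"
    using int[OF u u] int[OF u cp] int[OF cp u] int[OF cp cp]
    by (simp add: integral_add integral_diff integrable_diff)
  also have "\<dots> = complex_of_real (integral {0..1} (\<lambda>x. (cmod (u x))\<^sup>2)
      - (\<Sum>k\<in>K. (cmod (fcoeff u k))\<^sup>2) + (\<Sum>k\<in>K. (cmod (fcoeff u k - c k))\<^sup>2))"
    unfolding up pu pp integral_cmod_sq[OF u, symmetric]
    by (simp add: of_real_cmod_power2 algebra_simps sum.distrib sum_subtractf)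
  finally show ?thesis by (simp only: of_real_eq_iff)
qed

lemma bessel_inequality:
  fixes u :: "real \<Rightarrow> complex"
  assumes "continuous_on {0..1} u" "finite K"
  shows "(\<Sum>k\<in>K. (cmod (fcoeff u k))\<^sup>2) \<le> integral {0..1} (\<lambda>x. (cmod (u x))\<^sup>2)"
proof -
  have "0 \<le> integral {0..1} (\<lambda>x. (cmod (u x - trig_poly K (fcoeff u) x))\<^sup>2)"
    by (intro integral_nonneg integrable_continuous_real continuous_intros assms) auto
  then show ?thesis using integral_cmod_sq_diff_trig_poly[OF assms, of "fcoeff u"] by simp
qed

lemma trig_poly_extend:
  assumes "finite L" "K \<subseteq> L"
  shows "trig_poly K c = trig_poly L (\<lambda>k. if k \<in> K then c k else 0)"
  unfolding trig_poly_def fun_eq_iff using assms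
  by (auto intro: sum.mono_neutral_cong_left)

lemma trig_poly_add:
  assumes "finite K" "finite L"
  shows "trig_poly K c x + trig_poly L d x
       = trig_poly (K \<union> L) (\<lambda>k. (if k \<in> K then c k else 0) + (if k \<in> L then d k else 0)) x"
proof -
  have "trig_poly K c = trig_poly (K \<union> L) (\<lambda>k. if k \<in> K then c k else 0)"
    "trig_poly L d = trig_poly (K \<union> L) (\<lambda>k. if k \<in> L then d k else 0)"
    using assms by (auto intro: trig_poly_extend)
  then show ?thesis by (simp add: trig_poly_def distrib_right sum.distrib)
qed

lemma trig_poly_cmult: "a * trig_poly K c x = trig_poly K (\<lambda>k. a * c k) x"
  by (simp add: trig_poly_def sum_distrib_left mult.assoc)

lemma trig_poly_mult:
  assumes "finite K" "finite L"
  shows "trig_poly K c x * trig_poly L d x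
       = trig_poly ((\<lambda>(k, l). k + l) ` (K \<times> L))
           (\<lambda>m. \<Sum>(k, l)\<in>{(k, l) \<in> K \<times> L. k + l = m}. c k * d l) x"
proof -
  have "trig_poly K c x * trig_poly L d x = (\<Sum>(k, l)\<in>K \<times> L. c k * d l * circ_char (k + l) x)"
    unfolding trig_poly_def sum_product sum.cartesian_product
    by (simp add: mult_ac flip: circ_char_mult)
  also have "\<dots> = trig_poly ((\<lambda>(k, l). k + l) ` (K \<times> L))
      (\<lambda>m. \<Sum>(k, l)\<in>{(k, l) \<in> K \<times> L. k + l = m}. c k * d l) x"
    unfolding trig_poly_def using assms
    by (subst sum.image_gen[where g = "\<lambda>(k, l). k + l"])
       (auto simp: sum_distrib_right split_beta intro!: sum.cong)
  finally show ?thesis .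
qed

section \<open>Density of trigonometric polynomials and Parseval's identity\<close>

lemma circ_char_1_Arg2pi:
  assumes "0 \<le> x" "x < 1"
  shows "Arg2pi (circ_char 1 x) = 2 * pi * x"
proof -
  have "circ_char 1 x = exp (\<i> * complex_of_real (2 * pi * x))"
    unfolding circ_char_def by (simp add: algebra_simps)
  then show ?thesis using assms by (simp add: Arg2pi_exp)
qed

definition circ_lift :: "(real \<Rightarrow> 'a) \<Rightarrow> complex \<Rightarrow> 'a" where
  "circ_lift u z = u (Arg2pi z / (2 * pi))"

lemma circ_lift_circ_char:
  assumes "periodic1 u"
  shows "circ_lift u (circ_char 1 x) = u x"
proof -
  have "circ_lift u (circ_char 1 (frac x)) = u (frac x)"
    unfolding circ_lift_def by (simp add: circ_char_1_Arg2pi frac_lt_1)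
  moreover have "circ_char 1 (frac x) = circ_char 1 x"
    using periodic1_frac[OF periodic1_circ_char] .
  ultimately show ?thesis using periodic1_frac[OF assms] by simp
qed

lemma circ_char_1_image: "circ_char 1 ` {0..1} = sphere 0 1"
proof
  show "sphere 0 1 \<subseteq> circ_char 1 ` {0..1}"
  proof
    fix z :: complex assume "z \<in> sphere 0 1"
    then have "z = exp (\<i> * complex_of_real (Arg2pi z))"
      using Arg2pi_eq[of z] by simp
    then have "z = circ_char 1 (Arg2pi z / (2 * pi))"
      unfolding circ_char_def by (simp add: algebra_simps)
    moreover have "Arg2pi z / (2 * pi) \<in> {0..1}"
      using Arg2pi[of z] by auto
    ultimately show "z \<in> circ_char 1 ` {0..1}" by blast
  qed
qed auto

lemma continuous_on_circ_lift:
  assumes "continuous_on UNIV u" "periodic1 u"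
  shows "continuous_on (sphere 0 1) (circ_lift u)"
proof -
  have "quotient_map (top_of_set {0..1}) (top_of_set (sphere 0 1)) (circ_char 1)"
    by (intro continuous_imp_quotient_map)
       (auto simp: circ_char_1_image compact_space_subtopology Hausdorff_space_subtopology
             intro: continuous_intros)
  moreover have "continuous_map (top_of_set {0..1}) euclidean (circ_lift u \<circ> circ_char 1)"
    using assms by (auto simp: o_def circ_lift_circ_char intro: continuous_on_subset)
  ultimately have "continuous_map (top_of_set (sphere 0 1)) euclidean (circ_lift u)"
    by (rule continuous_compose_quotient_map)
  then show ?thesis by simp
qed

lemma of_real_Re_circ_char_1:
  "complex_of_real (Re (circ_char 1 x)) = trig_poly {1, -1} (\<lambda>_. 1 / 2) x"
  using complex_add_cnj[of "circ_char 1 x"] by (simp add: trig_poly_def field_simps)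

lemma of_real_Im_circ_char_1:
  "complex_of_real (Im (circ_char 1 x))
     = trig_poly {1, -1} (\<lambda>k. if k = 1 then 1 / (2 * \<i>) else - 1 / (2 * \<i>)) x"
  using complex_diff_cnj[of "circ_char 1 x"] by (simp add: trig_poly_def field_simps)

lemma real_trig_poly_dense:
  fixes u :: "real \<Rightarrow> real"
  assumes u: "continuous_on UNIV u" "periodic1 u" and e: "0 < e"
  shows "\<exists>K c. finite K \<and> (\<forall>x. cmod (complex_of_real (u x) - trig_poly K c x) < e)"
proof -
  define P where "P F \<longleftrightarrow> continuous_on (sphere 0 1) F \<and>
      (\<exists>K c. finite K \<and> (\<forall>x. complex_of_real (F (circ_char 1 x)) = trig_poly K c x))"
    for F :: "complex \<Rightarrow> real"
  have P_Re: "P Re" and P_Im: "P Im"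
    unfolding P_def using of_real_Re_circ_char_1 of_real_Im_circ_char_1
    by (auto intro!: continuous_intros exI[of _ "{1, -1}"])
  have "\<exists>F. P F \<and> (\<forall>z\<in>sphere 0 1. \<bar>circ_lift u z - F z\<bar> < e)"
  proof (rule Stone_Weierstrass_HOL)
    show "P (\<lambda>z. a)" for a
      unfolding P_def by (intro conjI continuous_intros exI[of _ "{0}"] exI[of _ "\<lambda>_. complex_of_real a"])
        (simp_all add: trig_poly_def)
    show "P (\<lambda>z. F z + G z)" "P (\<lambda>z. F z * G z)" if "P F \<and> P G" for F G
    proof -
      from that obtain K c L d
        where K: "finite K" "\<And>x. complex_of_real (F (circ_char 1 x)) = trig_poly K c x"
        and L: "finite L" "\<And>x. complex_of_real (G (circ_char 1 x)) = trig_poly L d x"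
        and cont: "continuous_on (sphere 0 1) F" "continuous_on (sphere 0 1) G"
        unfolding P_def by blast
      show "P (\<lambda>z. F z + G z)"
        unfolding P_def using K L cont
        by (intro conjI continuous_intros exI[of _ "K \<union> L"]) (auto simp: trig_poly_add)
      show "P (\<lambda>z. F z * G z)"
        unfolding P_def using K L cont
        by (intro conjI continuous_intros exI[of _ "(\<lambda>(k, l). k + l) ` (K \<times> L)"])
           (auto simp: trig_poly_mult)
    qed
    show "\<exists>F. P F \<and> F z \<noteq> F w" if "z \<in> sphere 0 1 \<and> w \<in> sphere 0 1 \<and> z \<noteq> w" for z w
      using that P_Re P_Im complex_eqI by blast
  qed (use e continuous_on_circ_lift[OF u] in \<open>auto simp: P_def\<close>)
  then obtain F K c
    where K: "finite K" and F: "\<And>x. complex_of_real (F (circ_char 1 x)) = trig_poly K c x"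
    and approx: "\<forall>z\<in>sphere 0 1. \<bar>circ_lift u z - F z\<bar> < e"
    unfolding P_def by blast
  have "cmod (complex_of_real (u x) - trig_poly K c x) < e" for x
    using approx[rule_format, of "circ_char 1 x"]
    by (simp add: circ_lift_circ_char[OF u(2)] flip: F of_real_diff)
  with K show ?thesis by blast
qed

lemma trig_poly_dense:
  fixes u :: "real \<Rightarrow> complex"
  assumes u: "continuous_on UNIV u" "periodic1 u" and e: "0 < e"
  shows "\<exists>K c. finite K \<and> (\<forall>x. cmod (u x - trig_poly K c x) < e)"
proof -
  have "periodic1 (\<lambda>x. Re (u x))" "periodic1 (\<lambda>x. Im (u x))"
    using u(2) by (simp_all add: periodic1_def)
  then obtain K c L d
    where K: "finite K" "\<And>x. cmod (complex_of_real (Re (u x)) - trig_poly K c x) < e / 2"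
    and L: "finite L" "\<And>x. cmod (complex_of_real (Im (u x)) - trig_poly L d x) < e / 2"
    using real_trig_poly_dense[of "\<lambda>x. Re (u x)" "e / 2"] real_trig_poly_dense[of "\<lambda>x. Im (u x)" "e / 2"]
      e u(1) by (metis continuous_on_Re continuous_on_Im half_gt_zero)
  define p where "p x = trig_poly K c x + \<i> * trig_poly L d x" for x
  have "cmod (u x - p x) < e" for x
  proof -
    have "u x - p x = (complex_of_real (Re (u x)) - trig_poly K c x)
        + \<i> * (complex_of_real (Im (u x)) - trig_poly L d x)"
      unfolding p_def by (simp add: complex_eq_iff algebra_simps)
    then have "cmod (u x - p x) \<le> cmod (complex_of_real (Re (u x)) - trig_poly K c x)
        + cmod (complex_of_real (Im (u x)) - trig_poly L d x)"
      by (metis norm_triangle_ineq norm_mult norm_ii mult_1)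
    with K(2)[of x] L(2)[of x] show ?thesis by linarith
  qed
  moreover have "p x = trig_poly (K \<union> L)
      (\<lambda>k. (if k \<in> K then c k else 0) + (if k \<in> L then \<i> * d k else 0)) x" for x
    unfolding p_def trig_poly_cmult trig_poly_add[OF K(1) L(1)] ..
  ultimately show ?thesis using K(1) L(1) by (metis finite_UnI)
qed

theorem parseval:
  fixes u :: "real \<Rightarrow> complex"
  assumes u: "continuous_on UNIV u" "periodic1 u"
  shows "((\<lambda>k. (cmod (fcoeff u k))\<^sup>2) has_sum integral {0..1} (\<lambda>x. (cmod (u x))\<^sup>2)) UNIV"
  unfolding has_sum_def tendsto_iff eventually_finite_subsets_at_top
proof (intro allI impI)
  fix e :: real assume e: "0 < e"
  define I where "I = integral {0..1} (\<lambda>x. (cmod (u x))\<^sup>2)"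
  have u01: "continuous_on {0..1} u" using u(1) by (rule continuous_on_subset) simp
  obtain K c where K: "finite K" and approx: "\<And>x. cmod (u x - trig_poly K c x) < sqrt e / 2"
    using trig_poly_dense[OF u, of "sqrt e / 2"] e by auto
  (* for F containing K, the partial Fourier sum over F approximates u in L^2 at least as well as
     the uniform approximant trig_poly K c does *)
  have "dist (\<Sum>k\<in>F. (cmod (fcoeff u k))\<^sup>2) I < e" if F: "finite F" "K \<subseteq> F" for F
  proof -
    define c' where "c' k = (if k \<in> K then c k else 0)" for k
    have "I - (\<Sum>k\<in>F. (cmod (fcoeff u k))\<^sup>2)
        \<le> integral {0..1} (\<lambda>x. (cmod (u x - trig_poly F c' x))\<^sup>2)"
      unfolding I_def integral_cmod_sq_diff_trig_poly[OF u01 F(1)] by (simp add: sum_nonneg)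
    also have "\<dots> \<le> integral {0..1} (\<lambda>x::real. e / 4)"
    proof (rule integral_le)
      show "(\<lambda>x. (cmod (u x - trig_poly F c' x))\<^sup>2) integrable_on {0..1}"
        by (intro integrable_continuous_real continuous_intros u01)
      show "(cmod (u x - trig_poly F c' x))\<^sup>2 \<le> e / 4" for x
      proof -
        have "(cmod (u x - trig_poly F c' x))\<^sup>2 \<le> (sqrt e / 2)\<^sup>2"
          using approx[of x] trig_poly_extend[OF F] unfolding c'_def
          by (intro power_mono) auto
        with e show ?thesis by (simp add: power_divide)
      qed
    qed (intro integrable_continuous_real continuous_intros)
    also have "\<dots> < e" using e by simp
    finally show ?thesis
      using bessel_inequality[OF u01 F(1)] unfolding I_def dist_real_def by linarith
  qed
  then show "\<exists>X. finite X \<and> X \<subseteq> UNIV \<and>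
      (\<forall>Y. finite Y \<and> X \<subseteq> Y \<and> Y \<subseteq> UNIV \<longrightarrow> dist (\<Sum>k\<in>Y. (cmod (fcoeff u k))\<^sup>2) I < e)"
    using K by blast
qed

lemma parseval_shift_diff:
  fixes u :: "real \<Rightarrow> complex"
  assumes u: "continuous_on UNIV u" "periodic1 u"
  shows "((\<lambda>k. (cmod (circ_char k h - 1))\<^sup>2 * (cmod (fcoeff u k))\<^sup>2) has_sum
           integral {0..1} (\<lambda>x. (cmod (u (x + h) - u x))\<^sup>2)) UNIV"
proof -
  have shifted: "continuous_on UNIV (\<lambda>x. u (x + h))"
    by (intro continuous_intros continuous_on_compose2[OF u(1)]) auto
  then have cont: "continuous_on UNIV (\<lambda>x. u (x + h) - u x)"
    by (intro continuous_intros u(1))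
  have per: "periodic1 (\<lambda>x. u (x + h) - u x)"
    using u(2) unfolding periodic1_def by (metis add.assoc add.commute)
  have "fcoeff (\<lambda>x. u (x + h) - u x) k = (circ_char k h - 1) * fcoeff u k" for k
    using fcoeff_diff[OF continuous_on_subset[OF shifted] continuous_on_subset[OF u(1)], of k]
      fcoeff_shift[OF u, of h k] by (simp add: algebra_simps)
  with parseval[OF cont per] show ?thesis by (simp add: norm_mult power_mult_distrib)
qed

section \<open>Sobolev regularity and L2 moduli of continuity\<close>

lemma sobolev_iff_summable:
  fixes u :: "real \<Rightarrow> complex"
  assumes u: "continuous_on UNIV u" "periodic1 u"
  shows "sobolev s u \<longleftrightarrow> (\<lambda>k. (1 + (real_of_int k)\<^sup>2) ^ s * (cmod (fcoeff u k))\<^sup>2) summable_on UNIV"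
proof -
  have u01: "continuous_on {0..1} u" using u(1) by (rule continuous_on_subset) simp
  have "u \<in> borel_measurable lborel"
    using borel_measurable_continuous_onI[OF u(1)] by simp
  moreover have "set_integrable lborel {0..1} (\<lambda>x. (norm (u x))\<^sup>2)"
    unfolding set_integrable_def
    by (rule borel_integrable_compact) (auto intro!: continuous_intros u01)
  ultimately show ?thesis
    unfolding sobolev_def using u(2) by (simp add: fourier_coeff_eq_fcoeff[OF u01])
qed

lemma sobolev_1_of_C1:
  fixes u u' :: "real \<Rightarrow> complex"
  assumes u: "\<And>x. (u has_vector_derivative u' x) (at x)" and u': "continuous_on UNIV u'"
    and per: "periodic1 u"
  shows "sobolev 1 u"
proof -
  have cu: "continuous_on UNIV u"
    using u by (meson continuous_at_imp_continuous_on has_vector_derivative_continuous)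
  have weight: "(1 + (real_of_int k)\<^sup>2) ^ 1 * (cmod (fcoeff u k))\<^sup>2
      = (cmod (fcoeff u k))\<^sup>2 + (cmod (fcoeff u' k))\<^sup>2 * (1 / (4 * pi\<^sup>2))" for k
    unfolding fcoeff_deriv[OF u per] by (simp add: norm_mult field_simps power2_eq_square)
  have "(\<lambda>k. (cmod (fcoeff u k))\<^sup>2) summable_on UNIV"
    using parseval[OF cu per] by (rule has_sum_imp_summable)
  moreover have "(\<lambda>k. (cmod (fcoeff u' k))\<^sup>2) summable_on UNIV"
    using parseval[OF u' periodic1_derivative[OF u per]] by (rule has_sum_imp_summable)
  ultimately show ?thesis
    unfolding sobolev_iff_summable[OF cu per] weight by (intro summable_on_add summable_on_cmult_left)
qed

lemma finite_ge_if_summable_on: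
  fixes f :: "'a \<Rightarrow> real"
  assumes f: "f summable_on A" "\<And>x. x \<in> A \<Longrightarrow> 0 \<le> f x" and c: "0 < c"
  shows "finite {x \<in> A. c \<le> f x}"
proof (rule ccontr)
  assume "infinite {x \<in> A. c \<le> f x}"
  moreover obtain N :: nat where N: "infsum f A / c < N" using reals_Archimedean2 by blast
  ultimately obtain B where B: "finite B" "card B = N" "B \<subseteq> {x \<in> A. c \<le> f x}"
    using infinite_arbitrarily_large by blast
  have "real N * c \<le> sum f B"
    using sum_bounded_below[of B c f] B by auto
  also have "\<dots> \<le> infsum f A"
    using B f by (intro finite_sum_le_infsum) auto
  finally show False using N c by (simp add: field_simps)
qed

lemma summable_on_freq_sq_fcoeff_if_shift_bound:
  fixes u :: "real \<Rightarrow> complex"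
  assumes u: "continuous_on UNIV u" "periodic1 u"
    and bound: "\<And>h. integral {0..1} (\<lambda>x. (cmod (u (x + h) - u x))\<^sup>2) \<le> C * h\<^sup>2"
  shows "(\<lambda>k. (real_of_int k)\<^sup>2 * (cmod (fcoeff u k))\<^sup>2) summable_on UNIV"
proof (rule nonneg_bdd_above_summable_on)
  have "(\<Sum>k\<in>F. (real_of_int k)\<^sup>2 * (cmod (fcoeff u k))\<^sup>2) \<le> C / pi\<^sup>2" if F: "finite F" for F
  proof -
    define M where "M = (\<Sum>k\<in>F. \<bar>real_of_int k\<bar>) + 1"
    have M: "1 \<le> M" "\<And>k. k \<in> F \<Longrightarrow> \<bar>real_of_int k\<bar> \<le> M"
      unfolding M_def using F member_le_sum[of _ F "\<lambda>k. \<bar>real_of_int k\<bar>"]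
      by (auto simp: sum_nonneg intro: add_increasing2)
    (* a shift small enough that |circ_char k h - 1| \<ge> pi |k| h for every k in F *)
    define h where "h = 1 / (pi * M)"
    have h: "0 < h" "pi * h * M = 1" using M(1) unfolding h_def by auto
    have "(\<Sum>k\<in>F. (pi * h)\<^sup>2 * ((real_of_int k)\<^sup>2 * (cmod (fcoeff u k))\<^sup>2))
        \<le> (\<Sum>k\<in>F. (cmod (circ_char k h - 1))\<^sup>2 * (cmod (fcoeff u k))\<^sup>2)"
    proof (intro sum_mono)
      fix k assume "k \<in> F"
      have "pi * \<bar>real_of_int k\<bar> * \<bar>h\<bar> = (pi * h) * \<bar>real_of_int k\<bar>"
        using h(1) by simp
      also have "\<dots> \<le> (pi * h) * M"
        using M(2)[OF \<open>k \<in> F\<close>] h(1) by (intro mult_left_mono) auto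
      finally have "pi * \<bar>real_of_int k\<bar> * \<bar>h\<bar> \<le> 1" using h(2) by simp
      then have "pi * \<bar>real_of_int k\<bar> * h \<le> cmod (circ_char k h - 1)"
        using norm_circ_char_minus_1_ge[of k h] h by simp
      then have "(pi * \<bar>real_of_int k\<bar> * h)\<^sup>2 \<le> (cmod (circ_char k h - 1))\<^sup>2"
        using h by (intro power_mono) auto
      from mult_right_mono[OF this, of "(cmod (fcoeff u k))\<^sup>2"]
      show "(pi * h)\<^sup>2 * ((real_of_int k)\<^sup>2 * (cmod (fcoeff u k))\<^sup>2)
          \<le> (cmod (circ_char k h - 1))\<^sup>2 * (cmod (fcoeff u k))\<^sup>2"
        by (simp add: power_mult_distrib mult_ac)
    qed
    also have "\<dots> \<le> integral {0..1} (\<lambda>x. (cmod (u (x + h) - u x))\<^sup>2)"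
      by (rule finite_sum_le_has_sum[OF parseval_shift_diff[OF u] F]) auto
    also have "\<dots> \<le> C * h\<^sup>2" by (rule bound)
    finally show ?thesis
      using h by (simp add: sum_distrib_left[symmetric] power_mult_distrib field_simps)
  qed
  then show "bdd_above (sum (\<lambda>k. (real_of_int k)\<^sup>2 * (cmod (fcoeff u k))\<^sup>2) ` {F. F \<subseteq> UNIV \<and> finite F})"
    by (auto simp: bdd_above_def)
qed simp

lemma shift_bound_if_summable_on_freq_sq_fcoeff:
  fixes u :: "real \<Rightarrow> complex"
  assumes u: "continuous_on UNIV u" "periodic1 u"
    and summable: "(\<lambda>k. (real_of_int k)\<^sup>2 * (cmod (fcoeff u k))\<^sup>2) summable_on UNIV"
  shows "integral {0..1} (\<lambda>x. (cmod (u (x + h) - u x))\<^sup>2)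
      \<le> 4 * pi\<^sup>2 * infsum (\<lambda>k. (real_of_int k)\<^sup>2 * (cmod (fcoeff u k))\<^sup>2) UNIV * h\<^sup>2"
proof -
  have "integral {0..1} (\<lambda>x. (cmod (u (x + h) - u x))\<^sup>2)
      \<le> 4 * pi\<^sup>2 * h\<^sup>2 * infsum (\<lambda>k. (real_of_int k)\<^sup>2 * (cmod (fcoeff u k))\<^sup>2) UNIV"
  proof (rule has_sum_mono[OF parseval_shift_diff[OF u]
        has_sum_cmult_right[OF has_sum_infsum[OF summable]]])
    fix k :: int
    have "(cmod (circ_char k h - 1))\<^sup>2 \<le> (2 * pi * \<bar>real_of_int k\<bar> * \<bar>h\<bar>)\<^sup>2"
      by (intro power_mono norm_circ_char_minus_1_le) simp
    then show "(cmod (circ_char k h - 1))\<^sup>2 * (cmod (fcoeff u k))\<^sup>2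
        \<le> 4 * pi\<^sup>2 * h\<^sup>2 * ((real_of_int k)\<^sup>2 * (cmod (fcoeff u k))\<^sup>2)"
      by (auto simp: power_mult_distrib intro: mult_right_mono[THEN order.trans])
  qed
  then show ?thesis by (simp add: mult_ac)
qed

lemma summable_on_freq_sq_fcoeff_deriv_if_sobolev2:
  fixes u u' :: "real \<Rightarrow> complex"
  assumes u: "\<And>x. (u has_vector_derivative u' x) (at x)" "periodic1 u" and "sobolev 2 u"
  shows "(\<lambda>k. (real_of_int k)\<^sup>2 * (cmod (fcoeff u' k))\<^sup>2) summable_on UNIV"
proof -
  have "continuous_on UNIV u"
    using u by (meson continuous_at_imp_continuous_on has_vector_derivative_continuous)
  with assms have "(\<lambda>k. (1 + (real_of_int k)\<^sup>2) ^ 2 * (cmod (fcoeff u k))\<^sup>2) summable_on UNIV"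
    by (simp add: sobolev_iff_summable)
  then show ?thesis
  proof (rule summable_on_comparison_test[OF summable_on_cmult_right[where c = "4 * pi\<^sup>2"]])
    fix k :: int
    have "(real_of_int k)\<^sup>2 * (cmod (fcoeff u' k))\<^sup>2
        = 4 * pi\<^sup>2 * (((real_of_int k)\<^sup>2)\<^sup>2 * (cmod (fcoeff u k))\<^sup>2)"
      unfolding fcoeff_deriv[OF u] by (simp add: norm_mult power_mult_distrib)
    also have "\<dots> \<le> 4 * pi\<^sup>2 * ((1 + (real_of_int k)\<^sup>2) ^ 2 * (cmod (fcoeff u k))\<^sup>2)"
      by (intro mult_left_mono mult_right_mono power_mono) auto
    finally show "(real_of_int k)\<^sup>2 * (cmod (fcoeff u' k))\<^sup>2
        \<le> 4 * pi\<^sup>2 * ((1 + (real_of_int k)\<^sup>2) ^ 2 * (cmod (fcoeff u k))\<^sup>2)" .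
  qed simp
qed

lemma norm_exp_i_diff_le:
  "cmod (exp (\<i> * complex_of_real s) - exp (\<i> * complex_of_real t)) \<le> \<bar>s - t\<bar>"
proof -
  have "exp (\<i> * complex_of_real s) - exp (\<i> * complex_of_real t)
      = exp (\<i> * complex_of_real t) * (exp (\<i> * complex_of_real (s - t)) - 1)"
    by (simp add: algebra_simps flip: exp_add)
  then have "cmod (exp (\<i> * complex_of_real s) - exp (\<i> * complex_of_real t))
      = 2 * \<bar>sin ((s - t) / 2)\<bar>"
    by (simp only: norm_mult dist_exp_i_1) simp
  also have "\<dots> \<le> \<bar>s - t\<bar>" using abs_sin_x_le_abs_x[of "(s - t) / 2"] by simp
  finally show ?thesis .
qed

lemma has_vector_derivative_exp_phase:
  fixes R R' :: "real \<Rightarrow> real"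
  assumes "(R has_real_derivative R' x) (at x)"
  shows "((\<lambda>x. exp (\<i> * complex_of_real (l * R x))) has_vector_derivative
           \<i> * complex_of_real (l * R' x) * exp (\<i> * complex_of_real (l * R x))) (at x)"
proof -
  have "((\<lambda>x. \<i> * complex_of_real (l * R x)) has_vector_derivative
      \<i> * complex_of_real (l * R' x)) (at x)"
    by (intro has_vector_derivative_mult_right has_vector_derivative_of_real DERIV_cmult assms)
  from field_vector_diff_chain_at[OF this DERIV_exp] show ?thesis
    by (simp add: o_def)
qed

lemma phase_derivative_shift_bound:
  fixes R R' :: "real \<Rightarrow> real" and a :: "real \<Rightarrow> complex"
  assumes R: "\<And>x. (R has_real_derivative R' x) (at x)" and bounded: "\<And>x. \<bar>R' x\<bar> \<le> M"
    and l: "l \<noteq> 0"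
    and a: "\<And>x. a x = \<i> * complex_of_real (l * R' x) * exp (\<i> * complex_of_real (l * R x))"
  shows "(R' (x + h) - R' x)\<^sup>2 \<le> 2 / l\<^sup>2 * (cmod (a (x + h) - a x))\<^sup>2 + 2 * l\<^sup>2 * M ^ 4 * h\<^sup>2"
proof -
  define f where "f y = exp (\<i> * complex_of_real (l * R y))" for y
  have R'_eq: "complex_of_real (R' y) = a y * cnj (f y) / (\<i> * l)" for y
    using l unfolding a f_def by (simp add: exp_minus[symmetric] exp_cnj flip: exp_add)
  have diff: "complex_of_real (R' (x + h) - R' x)
      = ((a (x + h) - a x) * cnj (f (x + h)) + a x * cnj (f (x + h) - f x)) / (\<i> * l)"
    unfolding of_real_diff R'_eq by (simp add: algebra_simps flip: diff_divide_distrib)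
  have "\<bar>R' (x + h) - R' x\<bar>
      = cmod ((a (x + h) - a x) * cnj (f (x + h)) + a x * cnj (f (x + h) - f x)) / \<bar>l\<bar>"
    using arg_cong[OF diff, of cmod] by (simp add: norm_divide norm_mult del: of_real_diff)
  also have "\<dots> \<le> (cmod (a (x + h) - a x) + \<bar>l\<bar> * M * (\<bar>l\<bar> * M * \<bar>h\<bar>)) / \<bar>l\<bar>"
  proof (rule divide_right_mono)
    have "cmod (a x) \<le> \<bar>l\<bar> * M"
      unfolding a using bounded[of x] by (simp add: norm_mult abs_mult mult_left_mono)
    moreover have "cmod (f (x + h) - f x) \<le> \<bar>l\<bar> * M * \<bar>h\<bar>"
    proof -
      have "cmod (f (x + h) - f x) \<le> \<bar>l\<bar> * \<bar>R (x + h) - R x\<bar>"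
        using norm_exp_i_diff_le[of "l * R (x + h)" "l * R x"]
        unfolding f_def by (simp add: abs_mult flip: right_diff_distrib)
      also have "\<dots> \<le> \<bar>l\<bar> * (M * \<bar>h\<bar>)"
        using field_differentiable_bound[of UNIV R R' M "x + h" x] R bounded
        by (intro mult_left_mono) auto
      finally show ?thesis by (simp add: mult.assoc)
    qed
    moreover have "0 \<le> M" using bounded[of x] by linarith
    moreover have "cmod (cnj (f (x + h))) = 1" by (simp add: f_def)
    ultimately show "cmod ((a (x + h) - a x) * cnj (f (x + h)) + a x * cnj (f (x + h) - f x))
        \<le> cmod (a (x + h) - a x) + \<bar>l\<bar> * M * (\<bar>l\<bar> * M * \<bar>h\<bar>)"
      by (auto simp: norm_mult simp flip: complex_cnj_diff
          intro!: order.trans[OF norm_triangle_ineq] mult_mono)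
  qed simp
  also have "\<dots> = cmod (a (x + h) - a x) / \<bar>l\<bar> + \<bar>l\<bar> * M\<^sup>2 * \<bar>h\<bar>"
    using l by (simp add: field_simps power2_eq_square)
  finally have "\<bar>R' (x + h) - R' x\<bar> \<le> cmod (a (x + h) - a x) / \<bar>l\<bar> + \<bar>l\<bar> * M\<^sup>2 * \<bar>h\<bar>" .
  then have "(R' (x + h) - R' x)\<^sup>2 \<le> (cmod (a (x + h) - a x) / \<bar>l\<bar> + \<bar>l\<bar> * M\<^sup>2 * \<bar>h\<bar>)\<^sup>2"
    by (metis abs_ge_zero power2_abs power_mono)
  also have "\<dots> \<le> 2 * (cmod (a (x + h) - a x) / \<bar>l\<bar>)\<^sup>2 + 2 * (\<bar>l\<bar> * M\<^sup>2 * \<bar>h\<bar>)\<^sup>2"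
    using sum_squares_ge_zero[of "cmod (a (x + h) - a x) / \<bar>l\<bar> - \<bar>l\<bar> * M\<^sup>2 * \<bar>h\<bar>" 0]
    by (simp add: power2_eq_square algebra_simps)
  finally show ?thesis by (simp add: power_divide power_mult_distrib)
qed

lemma integral_phase_derivative_shift_le:
  fixes R R' :: "real \<Rightarrow> real" and a :: "real \<Rightarrow> complex"
  assumes R: "\<And>x. (R has_real_derivative R' x) (at x)" "continuous_on UNIV R'"
    and bounded: "\<And>x. \<bar>R' x\<bar> \<le> M" and l: "l \<noteq> 0"
    and a: "\<And>x. a x = \<i> * complex_of_real (l * R' x) * exp (\<i> * complex_of_real (l * R x))"
    and ca: "continuous_on UNIV a"
  shows "integral {0..1} (\<lambda>x. (cmod (complex_of_real (R' (x + h)) - complex_of_real (R' x)))\<^sup>2)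
      \<le> 2 / l\<^sup>2 * integral {0..1} (\<lambda>x. (cmod (a (x + h) - a x))\<^sup>2) + 2 * l\<^sup>2 * M ^ 4 * h\<^sup>2"
proof -
  have shifted: "continuous_on UNIV (\<lambda>x. R' (x + h))" "continuous_on UNIV (\<lambda>x. a (x + h))"
    by (intro continuous_on_compose2[OF R(2)] continuous_on_compose2[OF ca] continuous_intros; simp)+
  have int_a: "(\<lambda>x. 2 / l\<^sup>2 * (cmod (a (x + h) - a x))\<^sup>2) integrable_on {0..1}"
    by (intro integrable_continuous_real continuous_intros
        continuous_on_subset[OF shifted(2) subset_UNIV] continuous_on_subset[OF ca subset_UNIV])
  have "integral {0..1} (\<lambda>x. (cmod (complex_of_real (R' (x + h)) - complex_of_real (R' x)))\<^sup>2)
      \<le> integral {0..1} (\<lambda>x. 2 / l\<^sup>2 * (cmod (a (x + h) - a x))\<^sup>2 + 2 * l\<^sup>2 * M ^ 4 * h\<^sup>2)"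
  proof (rule integral_le)
    show "(\<lambda>x. (cmod (complex_of_real (R' (x + h)) - complex_of_real (R' x)))\<^sup>2) integrable_on {0..1}"
      by (intro integrable_continuous_real continuous_intros
          continuous_on_subset[OF shifted(1) subset_UNIV] continuous_on_subset[OF R(2) subset_UNIV])
    show "(\<lambda>x. 2 / l\<^sup>2 * (cmod (a (x + h) - a x))\<^sup>2 + 2 * l\<^sup>2 * M ^ 4 * h\<^sup>2) integrable_on {0..1}"
      by (intro integrable_add int_a integrable_continuous_real continuous_intros)
    show "(cmod (complex_of_real (R' (x + h)) - complex_of_real (R' x)))\<^sup>2
        \<le> 2 / l\<^sup>2 * (cmod (a (x + h) - a x))\<^sup>2 + 2 * l\<^sup>2 * M ^ 4 * h\<^sup>2" for x
      using phase_derivative_shift_bound[OF R(1) bounded l a, of x h] by (simp flip: of_real_diff)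
  qed
  also have "\<dots> = 2 / l\<^sup>2 * integral {0..1} (\<lambda>x. (cmod (a (x + h) - a x))\<^sup>2) + 2 * l\<^sup>2 * M ^ 4 * h\<^sup>2"
    by (subst integral_add[OF int_a]) (auto intro: integrable_continuous_real continuous_intros)
  finally show ?thesis .
qed

lemma summable_on_freq_sq_fcoeff_deriv_if_sobolev2_exp:
  fixes R R' :: "real \<Rightarrow> real"
  assumes R: "\<And>x. (R has_real_derivative R' x) (at x)" "continuous_on UNIV R'" "periodic1 R"
    and bounded: "\<And>x. \<bar>R' x\<bar> \<le> M" and l: "l \<noteq> 0"
    and sobolev: "sobolev 2 (\<lambda>x. exp (\<i> * complex_of_real (l * R x)))"
  shows "(\<lambda>k. (real_of_int k)\<^sup>2 * (cmod (fcoeff (\<lambda>x. complex_of_real (R' x)) k))\<^sup>2) summable_on UNIV"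
proof -
  define f where "f x = exp (\<i> * complex_of_real (l * R x))" for x
  define a where "a x = \<i> * complex_of_real (l * R' x) * f x" for x
  have f_deriv: "(f has_vector_derivative a x) (at x)" for x
    unfolding f_def[abs_def] a_def f_def by (rule has_vector_derivative_exp_phase[OF R(1)])
  have cf: "continuous_on UNIV f"
    using f_deriv by (meson continuous_at_imp_continuous_on has_vector_derivative_continuous)
  have ca: "continuous_on UNIV a"
    unfolding a_def by (intro continuous_intros cf R(2))
  have pf: "periodic1 f" using R(3) by (simp add: periodic1_def f_def)
  have pa: "periodic1 a" by (rule periodic1_derivative[OF f_deriv pf])
  have "(\<lambda>k. (real_of_int k)\<^sup>2 * (cmod (fcoeff a k))\<^sup>2) summable_on UNIV"
    using sobolev unfolding f_def[symmetric]
    by (rule summable_on_freq_sq_fcoeff_deriv_if_sobolev2[OF f_deriv pf])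
  from shift_bound_if_summable_on_freq_sq_fcoeff[OF ca pa this]
  obtain C where a_shift: "\<And>h. integral {0..1} (\<lambda>x. (cmod (a (x + h) - a x))\<^sup>2) \<le> C * h\<^sup>2"
    by blast
  show ?thesis
  proof (rule summable_on_freq_sq_fcoeff_if_shift_bound)
    show "continuous_on UNIV (\<lambda>x. complex_of_real (R' x))" by (intro continuous_intros R(2))
    show "periodic1 (\<lambda>x. complex_of_real (R' x))"
      using periodic1_derivative[of R R'] R
      by (simp add: periodic1_def has_real_derivative_iff_has_vector_derivative)
    show "integral {0..1} (\<lambda>x. (cmod (complex_of_real (R' (x + h)) - complex_of_real (R' x)))\<^sup>2)
        \<le> (2 / l\<^sup>2 * C + 2 * l\<^sup>2 * M ^ 4) * h\<^sup>2" for h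
      using integral_phase_derivative_shift_le[OF R(1,2) bounded l _ ca, of h]
        mult_left_mono[OF a_shift[of h], of "2 / l\<^sup>2"]
      by (simp add: a_def f_def algebra_simps)
  qed
qed

section \<open>Liouvillean numbers\<close>

lemma not_diophantineE:
  assumes "\<not> diophantine \<alpha> \<beta>" "0 < C"
  obtains k p :: int where "k \<noteq> 0" "\<bar>\<alpha> * of_int k + of_int p\<bar> < C / (real_of_int \<bar>k\<bar>) powr (1 + \<beta>)"
proof -
  obtain k :: int where "k \<noteq> 0"
    and "(INF p::int. \<bar>\<alpha> * of_int k + of_int p\<bar>) < C / (real_of_int \<bar>k\<bar>) powr (1 + \<beta>)"
    using assms unfolding diophantine_def by (auto simp: not_le)
  moreover have "bdd_below (range (\<lambda>p::int. \<bar>\<alpha> * of_int k + of_int p\<bar>))"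
    by (rule bdd_belowI[of _ 0]) auto
  ultimately show ?thesis using that by (auto simp: cINF_less_iff)
qed

lemma irrational_mult_round_pos:
  assumes "\<alpha> \<notin> \<rat>" "k \<noteq> 0"
  shows "0 < \<bar>\<alpha> * of_int k - of_int (round (\<alpha> * of_int k))\<bar>"
proof -
  have "\<alpha> * of_int k \<noteq> of_int (round (\<alpha> * of_int k))"
    using assms by (metis Rats_divide Rats_of_int nonzero_mult_div_cancel_right of_int_0_eq_iff)
  then show ?thesis by simp
qed

lemma liouvillean_approximation:
  fixes \<alpha> :: real
  assumes irrational: "\<alpha> \<notin> \<rat>" and liouvillean: "liouvillean \<alpha>"
  obtains q :: nat and p :: int where "M < q" "\<bar>\<alpha> * real q + of_int p\<bar> < 1 / real q ^ n"
proof -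
  define d where "d k = \<bar>\<alpha> * of_int k - of_int (round (\<alpha> * of_int k))\<bar>" for k :: int
  have d_le: "d k \<le> \<bar>\<alpha> * of_int k + of_int p\<bar>" for k p
    using round_diff_minimal[of "\<alpha> * of_int k" "- p"] unfolding d_def by simp
  have d_pos: "0 < d k" if "k \<noteq> 0" for k
    using irrational_mult_round_pos[OF irrational that] unfolding d_def .
  (* \<delta> stays below the distance of k \<alpha> to \<int> for 0 < |k| \<le> M + 1, so a good enough
     approximation must have |k| > M. *)
  define K where "K = {- int M - 1..int M + 1} - {0}"
  define \<delta> where "\<delta> = Min (d ` K)"
  have K: "finite K" "1 \<in> K" unfolding K_def by auto
  have \<delta>: "0 < \<delta>" "\<And>k. k \<in> K \<Longrightarrow> \<delta> \<le> d k"
    unfolding \<delta>_def using K d_pos by (subst Min_gr_iff; force simp: K_def) (simp add: K(1))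
  have "\<delta> \<le> 1"
    using \<delta>(2)[OF K(2)] d_le[of 1 "- round \<alpha>"] of_int_round_abs_le[of \<alpha>] by (simp add: abs_minus_commute)
  have "\<not> diophantine \<alpha> (real n + 1)"
    using liouvillean unfolding liouvillean_def by auto
  then obtain k p :: int where k: "k \<noteq> 0"
    and kp: "\<bar>\<alpha> * of_int k + of_int p\<bar> < \<delta> / (real_of_int \<bar>k\<bar>) powr (1 + (real n + 1))"
    using \<delta>(1) by (rule not_diophantineE)
  define q where "q = nat \<bar>k\<bar>"
  have q: "real q = real_of_int \<bar>k\<bar>" "1 \<le> real q" using k unfolding q_def by auto
  have "1 + (real n + 1) = real (n + 2)" by simp
  then have "(real_of_int \<bar>k\<bar>) powr (1 + (real n + 1)) = real q ^ (n + 2)"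
    unfolding q(1)[symmetric] by (metis powr_realpow q(2) zero_less_one less_le_trans)
  then have kp': "\<bar>\<alpha> * of_int k + of_int p\<bar> < \<delta> / real q ^ (n + 2)" using kp by simp
  also have "\<dots> \<le> \<delta>" using q \<delta>(1) by (simp add: divide_le_eq one_le_power del: power_Suc)
  finally have "k \<notin> K" using \<delta>(2) d_le[of k p] by fastforce
  then have "M < q" using k unfolding K_def q_def by auto
  moreover have "\<delta> / real q ^ (n + 2) \<le> 1 / real q ^ n"
    using q \<open>\<delta> \<le> 1\<close> \<delta>(1) by (intro frac_le power_increasing) auto
  moreover have "\<bar>\<alpha> * of_int k + of_int p\<bar> = \<bar>\<alpha> * real q + of_int (sgn k * p)\<bar>"
    using k unfolding q_def by (cases "0 < k") (auto simp: abs_if algebra_simps)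
  ultimately show ?thesis using that kp' by (metis order.strict_trans2)
qed

section \<open>Lacunary cosine series\<close>

lemma continuous_on_suminf:
  fixes f :: "nat \<Rightarrow> 'a::topological_space \<Rightarrow> 'b::banach"
  assumes "\<And>j. continuous_on S (f j)" "\<And>j x. x \<in> S \<Longrightarrow> norm (f j x) \<le> B j" "summable B"
  shows "continuous_on S (\<lambda>x. \<Sum>j. f j x)"
  by (rule uniform_limit_theorem[OF _ Weierstrass_m_test[OF assms(2,3)]])
     (auto intro!: always_eventually continuous_on_sum assms(1))

lemma has_real_derivative_suminf:
  fixes f f' :: "nat \<Rightarrow> real \<Rightarrow> real"
  assumes "\<And>j x. (f j has_real_derivative f' j x) (at x)" "\<And>x. summable (\<lambda>j. f j x)"
    and "eventually (\<lambda>j. \<forall>x. \<bar>f' j x\<bar> \<le> B j) sequentially" "summable B"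
  shows "((\<lambda>x. \<Sum>j. f j x) has_real_derivative (\<Sum>j. f' j x)) (at x)"
  by (rule has_field_derivative_series'(2)[where S = UNIV])
     (use assms in \<open>auto intro!: Weierstrass_m_test'_ev\<close>)

lemma sums_integral_suminf:
  fixes f :: "nat \<Rightarrow> real \<Rightarrow> 'a::banach"
  assumes cont: "\<And>j. continuous_on {a..b} (f j)"
    and bound: "\<And>j x. x \<in> {a..b} \<Longrightarrow> norm (f j x) \<le> B j" and B: "summable B"
  shows "(\<lambda>j. integral {a..b} (f j)) sums integral {a..b} (\<lambda>x. \<Sum>j. f j x)"
proof -
  obtain I J where I: "\<And>N. ((\<lambda>x. \<Sum>j<N. f j x) has_integral I N) {a..b}"
    and J: "((\<lambda>x. \<Sum>j. f j x) has_integral J) {a..b}" and IJ: "I \<longlonglongrightarrow> J"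
    by (rule uniform_limit_integral[OF Weierstrass_m_test[OF bound B]])
       (auto intro!: continuous_on_sum cont)
  have "I N = (\<Sum>j<N. integral {a..b} (f j))" for N
  proof -
    have "I N = integral {a..b} (\<lambda>x. \<Sum>j<N. f j x)" using I[of N] by (rule integral_unique[symmetric])
    also have "\<dots> = (\<Sum>j<N. integral {a..b} (f j))"
      by (rule integral_sum) (auto intro: integrable_continuous_real cont)
    finally show ?thesis .
  qed
  then have "I = (\<lambda>N. \<Sum>j<N. integral {a..b} (f j))" by (intro ext)
  with IJ J show ?thesis by (simp add: sums_def integral_unique)
qed

lemma summable_geometric_half: "summable (\<lambda>j. C * (1 / 2 :: real) ^ j)"
  by (intro summable_mult summable_geometric) simp

(* The n-th derivative of cos (2 pi q x) / q^2. *)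
definition wave :: "nat \<Rightarrow> nat \<Rightarrow> real \<Rightarrow> real" where
  "wave q n x = (2 * pi * q) ^ n / (real q)\<^sup>2 * cos (2 * pi * q * x + n * pi / 2)"

lemma continuous_on_wave [continuous_intros]: "continuous_on S (wave q n)"
  unfolding wave_def by (intro continuous_intros)

lemma cos_add_2pi_int: "cos (x + 2 * pi * of_int n) = cos x"
  by (simp add: cos_add sin_int_2pin)

lemma has_real_derivative_wave: "(wave q n has_real_derivative wave q (Suc n) x) (at x)"
proof -
  have sin: "cos (2 * pi * q * x + real (Suc n) * pi / 2) = - sin (2 * pi * q * x + n * pi / 2)"
    by (simp add: cos_add add_divide_distrib algebra_simps)
  have "((\<lambda>x. cos (2 * pi * q * x + n * pi / 2)) has_real_derivative
      - sin (2 * pi * q * x + n * pi / 2) * (2 * pi * q)) (at x)"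
    by (auto intro!: derivative_eq_intros)
  from DERIV_cmult[OF this, of "(2 * pi * q) ^ n / (real q)\<^sup>2"] show ?thesis
    unfolding wave_def by (simp only: sin power_Suc) (simp add: algebra_simps)
qed

lemma periodic1_wave: "periodic1 (wave q n)"
proof -
  have "cos (2 * pi * q * (x + 1) + n * pi / 2) = cos (2 * pi * q * x + n * pi / 2)" for x
    using cos_add_2pi_int[of "2 * pi * q * x + n * pi / 2" "int q"] by (simp add: algebra_simps)
  then show ?thesis by (simp add: periodic1_def wave_def)
qed

lemma abs_wave_le: "\<bar>wave q n x\<bar> \<le> (2 * pi * q) ^ n / (real q)\<^sup>2"
proof -
  have "\<bar>wave q n x\<bar> = \<bar>(2 * pi * q) ^ n / (real q)\<^sup>2\<bar> * \<bar>cos (2 * pi * q * x + n * pi / 2)\<bar>"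
    unfolding wave_def abs_mult ..
  also have "\<dots> \<le> \<bar>(2 * pi * q) ^ n / (real q)\<^sup>2\<bar> * 1"
    by (intro mult_left_mono abs_cos_le_one) simp
  finally show ?thesis by simp
qed

lemma abs_cos_diff_le: "\<bar>cos a - cos b\<bar> \<le> \<bar>a - b :: real\<bar>"
proof -
  have "\<bar>cos a - cos b\<bar> = 2 * \<bar>sin ((a + b) / 2)\<bar> * \<bar>sin ((b - a) / 2)\<bar>"
    by (simp add: cos_diff_cos abs_mult)
  also have "\<dots> \<le> 2 * 1 * \<bar>(b - a) / 2\<bar>"
    by (intro mult_mono abs_sin_le_one abs_sin_x_le_abs_x) auto
  finally show ?thesis by simp
qed

lemma abs_wave_shift_diff_le:
  assumes "\<bar>\<alpha> * q + of_int p\<bar> \<le> \<epsilon>"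
  shows "\<bar>wave q n (x + \<alpha>) - wave q n x\<bar> \<le> (2 * pi * q) ^ n / (real q)\<^sup>2 * (2 * pi * \<epsilon>)"
proof -
  define C where "C = (2 * pi * q) ^ n / (real q)\<^sup>2"
  define t where "t = 2 * pi * q * x + n * pi / 2"
  have "cos (2 * pi * q * (x + \<alpha>) + n * pi / 2) = cos (t + 2 * pi * (\<alpha> * q + of_int p))"
    using cos_add_2pi_int[of "t + 2 * pi * (\<alpha> * q + of_int p)" "- p"]
    by (simp add: t_def algebra_simps)
  moreover have "0 \<le> C" unfolding C_def by simp
  ultimately have "\<bar>wave q n (x + \<alpha>) - wave q n x\<bar>
      = C * \<bar>cos (t + 2 * pi * (\<alpha> * q + of_int p)) - cos t\<bar>"
    unfolding wave_def C_def[symmetric] t_def[symmetric]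
    by (simp add: abs_mult flip: right_diff_distrib)
  also have "\<dots> \<le> C * (2 * pi * \<epsilon>)"
  proof (rule mult_left_mono)
    have "\<bar>cos (t + 2 * pi * (\<alpha> * q + of_int p)) - cos t\<bar> \<le> 2 * pi * \<bar>\<alpha> * q + of_int p\<bar>"
      using abs_cos_diff_le[of "t + 2 * pi * (\<alpha> * q + of_int p)" t] by (simp add: abs_mult)
    also have "\<dots> \<le> 2 * pi * \<epsilon>" using assms by simp
    finally show "\<bar>cos (t + 2 * pi * (\<alpha> * q + of_int p)) - cos t\<bar> \<le> 2 * pi * \<epsilon>" .
  qed (simp add: C_def)
  finally show ?thesis unfolding C_def .
qed

lemma of_real_wave_0:
  assumes "0 < q"
  shows "complex_of_real (wave q 0 x) = trig_poly {int q, - int q} (\<lambda>_. 1 / (2 * (real q)\<^sup>2)) x"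
proof -
  have "complex_of_real (cos (2 * pi * q * x)) = (circ_char q x + circ_char (- q) x) / 2"
    by (simp add: circ_char_eq_cis complex_eq_iff)
  then show ?thesis using assms by (simp add: wave_def trig_poly_def field_simps)
qed

locale liouville_denominators =
  fixes \<alpha> :: real and q :: "nat \<Rightarrow> nat"
  assumes strict_mono_q: "strict_mono q"
    and q_ge: "2 ^ Suc j \<le> q j"
    and q_approx: "\<exists>p::int. \<bar>\<alpha> * q j + of_int p\<bar> < 1 / real (q j) ^ j"
begin

lemma q_pos: "1 \<le> real (q j)"
  using q_ge[of j] by (metis le_trans of_nat_1 of_nat_le_iff one_le_power one_le_numeral)

lemma inverse_q_le: "1 / real (q j) \<le> (1 / 2) ^ j"
proof -
  have "(2::real) ^ Suc j \<le> real (q j)"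
    using q_ge[of j] by (metis of_nat_le_iff of_nat_numeral of_nat_power)
  then have "1 / real (q j) \<le> 1 / 2 ^ Suc j" by (intro frac_le) auto
  also have "\<dots> \<le> (1 / 2) ^ j" unfolding power_one_over by (intro frac_le) auto
  finally show ?thesis .
qed

lemma abs_wave_0_le: "\<bar>wave (q j) 0 x\<bar> \<le> (1 / 2) ^ j"
proof -
  have "\<bar>wave (q j) 0 x\<bar> \<le> 1 / (real (q j))\<^sup>2" using abs_wave_le[of "q j" 0 x] by simp
  also have "\<dots> \<le> 1 / real (q j)"
    using q_pos[of j] by (intro divide_left_mono) (auto simp: power2_eq_square)
  finally show ?thesis using inverse_q_le[of j] by linarith
qed

lemma abs_wave_1_le: "\<bar>wave (q j) (Suc 0) x\<bar> \<le> 2 * pi * (1 / 2) ^ j"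
proof -
  have "\<bar>wave (q j) (Suc 0) x\<bar> \<le> 2 * pi * (1 / real (q j))"
    using abs_wave_le[of "q j" "Suc 0" x] q_pos[of j] by (simp add: power2_eq_square)
  also have "\<dots> \<le> 2 * pi * (1 / 2) ^ j" by (intro mult_left_mono inverse_q_le) auto
  finally show ?thesis .
qed

lemma abs_wave_shift_diff_le_geometric:
  assumes "n \<le> j"
  shows "\<bar>wave (q j) n (x + \<alpha>) - wave (q j) n x\<bar> \<le> (2 * pi) ^ Suc n * (1 / 2) ^ j"
proof -
  define r where "r = real (q j)"
  have r: "1 \<le> r" unfolding r_def by (rule q_pos)
  obtain p :: int where p: "\<bar>\<alpha> * r + of_int p\<bar> \<le> 1 / r ^ j"
    using q_approx[of j] unfolding r_def by (auto intro: less_imp_le)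
  have "\<bar>wave (q j) n (x + \<alpha>) - wave (q j) n x\<bar>
      \<le> (2 * pi * r) ^ n / r\<^sup>2 * (2 * pi * (1 / r ^ j))"
    using abs_wave_shift_diff_le[OF p[unfolded r_def]] unfolding r_def .
  also have "\<dots> = (2 * pi) ^ Suc n * (r ^ n / r ^ j) * (1 / r\<^sup>2)"
    using r by (simp add: power_mult_distrib field_simps)
  also have "\<dots> \<le> (2 * pi) ^ Suc n * 1 * (1 / 2) ^ j"
  proof (intro mult_mono)
    show "r ^ n / r ^ j \<le> 1" using r assms by (simp add: divide_le_eq_1 power_increasing)
    have "1 / r\<^sup>2 \<le> 1 / r" using r by (intro divide_left_mono) (auto simp: power2_eq_square)
    then show "1 / r\<^sup>2 \<le> (1 / 2) ^ j" using inverse_q_le[of j] unfolding r_def by linarith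
  qed (use r in auto)
  finally show ?thesis by simp
qed

definition R :: "real \<Rightarrow> real" where
  "R x = (\<Sum>j. wave (q j) 0 x)"

definition R' :: "real \<Rightarrow> real" where
  "R' x = (\<Sum>j. wave (q j) (Suc 0) x)"

(* Q n is the n-th derivative of the coboundary Q 0 = R (x + alpha) - R x. *)
definition Q :: "nat \<Rightarrow> real \<Rightarrow> real" where
  "Q n x = (\<Sum>j. wave (q j) n (x + \<alpha>) - wave (q j) n x)"

lemma summable_wave_0: "summable (\<lambda>j. wave (q j) 0 x)"
  by (rule summable_comparison_test[OF _ summable_geometric_half[of 1]]) (simp add: abs_wave_0_le)

lemma has_real_derivative_R: "(R has_real_derivative R' x) (at x)"
  unfolding R_def[abs_def] R'_def
  by (rule has_real_derivative_suminf[where B = "\<lambda>j. 2 * pi * (1 / 2) ^ j"])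
     (auto intro!: always_eventually has_real_derivative_wave summable_wave_0
       summable_geometric_half abs_wave_1_le)

lemma continuous_on_R': "continuous_on UNIV R'"
  unfolding R'_def[abs_def]
  by (rule continuous_on_suminf[where B = "\<lambda>j. 2 * pi * (1 / 2) ^ j"])
     (auto intro: continuous_on_wave abs_wave_1_le summable_geometric_half)

lemma abs_R'_le: "\<bar>R' x\<bar> \<le> 4 * pi"
proof -
  have "\<bar>R' x\<bar> \<le> (\<Sum>j. 2 * pi * (1 / 2) ^ j)"
    using norm_suminf_le[of "\<lambda>j. wave (q j) (Suc 0) x" "\<lambda>j. 2 * pi * (1 / 2) ^ j"]
      abs_wave_1_le summable_geometric_half
    unfolding R'_def by simp
  also have "\<dots> = 4 * pi" by (simp add: suminf_mult suminf_geometric)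
  finally show ?thesis .
qed

lemma periodic1_R: "periodic1 R"
  using periodic1_wave by (simp add: periodic1_def R_def)

lemma eventually_abs_wave_shift_diff_le:
  "\<forall>\<^sub>F j in sequentially. \<forall>x. \<bar>wave (q j) n (x + \<alpha>) - wave (q j) n x\<bar> \<le> (2 * pi) ^ Suc n * (1 / 2) ^ j"
  unfolding eventually_sequentially using abs_wave_shift_diff_le_geometric by blast

lemma has_real_derivative_Q: "(Q n has_real_derivative Q (Suc n) x) (at x)"
  unfolding Q_def[abs_def]
proof (rule has_real_derivative_suminf[OF _ _ eventually_abs_wave_shift_diff_le summable_geometric_half])
  show "((\<lambda>x. wave (q j) n (x + \<alpha>) - wave (q j) n x) has_real_derivative
      wave (q j) (Suc n) (x + \<alpha>) - wave (q j) (Suc n) x) (at x)" for j x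
    by (intro DERIV_diff has_real_derivative_wave DERIV_shift[THEN iffD1])
  show "summable (\<lambda>j. wave (q j) n (x + \<alpha>) - wave (q j) n x)" for x
    using eventually_abs_wave_shift_diff_le[of n]
    by (intro summable_comparison_test_ev[OF _ summable_geometric_half]) (auto elim: eventually_mono)
qed

lemma Q_0: "Q 0 x = R (x + \<alpha>) - R x"
  unfolding Q_def R_def by (rule suminf_diff[symmetric]) (auto intro: summable_wave_0)

lemma fcoeff_R: "fcoeff (\<lambda>x. complex_of_real (R x)) (q m) = 1 / (2 * (real (q m))\<^sup>2)"
proof -
  let ?U = "\<lambda>j x. complex_of_real (wave (q j) 0 x) * circ_char (- q m) x"
  have "(\<lambda>j. integral {0..1} (?U j)) sums integral {0..1} (\<lambda>x. \<Sum>j. ?U j x)"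
    by (rule sums_integral_suminf[where f = ?U and B = "\<lambda>j. 1 * (1 / 2) ^ j"])
       (auto intro!: continuous_intros simp: norm_mult abs_wave_0_le summable_geometric_half)
  moreover have "(\<lambda>x. \<Sum>j. ?U j x) = (\<lambda>x. complex_of_real (R x) * circ_char (- q m) x)"
    unfolding R_def suminf_of_real[OF summable_wave_0]
    by (simp add: suminf_mult2[OF summable_of_real[OF summable_wave_0]])
  moreover have "integral {0..1} (?U j)
      = (if j = m then complex_of_real (1 / (2 * (real (q m))\<^sup>2)) else 0)" for j
  proof -
    have "q j > 0" "q m > 0" using q_pos[of j] q_pos[of m] by auto
    moreover have "int (q m) = int (q j) \<longleftrightarrow> j = m"
      using strict_mono_eq[OF strict_mono_q, of m j] by auto
    ultimately show ?thesis
      using fcoeff_trig_poly[of "{int (q j), - int (q j)}" "\<lambda>_. 1 / (2 * (real (q j))\<^sup>2)" "q m"]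
      by (auto simp: fcoeff_def of_real_wave_0)
  qed
  ultimately have "(\<lambda>j. if j = m then complex_of_real (1 / (2 * (real (q m))\<^sup>2)) else 0) sums
      fcoeff (\<lambda>x. complex_of_real (R x)) (q m)"
    by (simp add: fcoeff_def)
  from sums_unique2[OF this sums_single] show ?thesis by simp
qed

lemma not_summable_on_freq_sq_fcoeff_R':
  "\<not> (\<lambda>k. (real_of_int k)\<^sup>2 * (cmod (fcoeff (\<lambda>x. complex_of_real (R' x)) k))\<^sup>2) summable_on UNIV"
proof
  let ?w = "\<lambda>k. (real_of_int k)\<^sup>2 * (cmod (fcoeff (\<lambda>x. complex_of_real (R' x)) k))\<^sup>2"
  assume "?w summable_on UNIV"
  then have "finite {k \<in> UNIV. pi\<^sup>2 \<le> ?w k}"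
    by (rule finite_ge_if_summable_on) auto
  moreover have "pi\<^sup>2 \<le> ?w (q j)" for j
  proof -
    have "fcoeff (\<lambda>x. complex_of_real (R' x)) (q j)
        = 2 * of_real pi * \<i> * of_int (q j) * fcoeff (\<lambda>x. complex_of_real (R x)) (q j)"
      using periodic1_R
      by (intro fcoeff_deriv has_vector_derivative_of_real has_real_derivative_R) (simp add: periodic1_def)
    then have "cmod (fcoeff (\<lambda>x. complex_of_real (R' x)) (q j)) = pi / real (q j)"
      using q_pos[of j] by (simp add: fcoeff_R norm_mult norm_divide power2_eq_square)
    then show ?thesis
      using q_pos[of j] by (simp add: power_divide)
  qed
  then have "range (\<lambda>j. int (q j)) \<subseteq> {k \<in> UNIV. pi\<^sup>2 \<le> ?w k}" by auto
  moreover have "infinite (range (\<lambda>j. int (q j)))"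
    using strict_mono_q by (auto simp: strict_mono_eq inj_on_def dest!: finite_imageD)
  ultimately show False using finite_subset by blast
qed

lemma continuous_on_R: "continuous_on UNIV R"
  using has_real_derivative_R by (intro DERIV_continuous_on) auto

lemma smooth_circle_Q: "smooth_circle (Q 0)"
proof -
  have "periodic1 (Q 0)"
    using periodic1_R unfolding periodic1_def Q_0 by (metis add.commute add.left_commute)
  then show ?thesis unfolding smooth_circle_def using has_real_derivative_Q by blast
qed

lemma mean_zero_Q: "mean_zero (Q 0)"
proof -
  have Q: "Q 0 = (\<lambda>x. R (x + \<alpha>) - R x)" by (simp add: fun_eq_iff Q_0)
  have shifted: "continuous_on UNIV (\<lambda>x. R (x + \<alpha>))"
    by (intro continuous_on_compose2[OF continuous_on_R] continuous_intros) auto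
  have cont: "continuous_on {0..1} (Q 0)"
    unfolding Q by (intro continuous_intros continuous_on_subset[OF shifted subset_UNIV]
        continuous_on_subset[OF continuous_on_R subset_UNIV])
  have "set_integrable lborel {0..1} (Q 0)"
    unfolding set_integrable_def using borel_integrable_compact[OF _ cont] by simp
  then have "(LINT x:{0..1}|lborel. Q 0 x) = integral {0..1} (\<lambda>x. R (x + \<alpha>) - R x)"
    unfolding Q by (rule set_borel_integral_eq_integral)
  also have "\<dots> = integral {0..1} (\<lambda>x. R (x + \<alpha>)) - integral {0..1} R"
    by (intro integral_diff integrable_continuous_real continuous_on_subset[OF shifted subset_UNIV]
        continuous_on_subset[OF continuous_on_R subset_UNIV])
  also have "\<dots> = 0"
    by (simp add: integral_periodic1_shift[OF continuous_on_R periodic1_R])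
  finally show ?thesis unfolding mean_zero_def .
qed

lemma sobolev_1_R: "sobolev 1 (\<lambda>x. complex_of_real (R x))"
  using periodic1_R
  by (intro sobolev_1_of_C1[OF has_vector_derivative_of_real[OF has_real_derivative_R]] continuous_intros
      continuous_on_R') (simp add: periodic1_def)

lemma not_sobolev_2_R: "\<not> sobolev 2 (\<lambda>x. complex_of_real (R x))"
  using not_summable_on_freq_sq_fcoeff_R' periodic1_R
    summable_on_freq_sq_fcoeff_deriv_if_sobolev2[OF has_vector_derivative_of_real[OF has_real_derivative_R]]
  by (auto simp: periodic1_def)

lemma sobolev_1_exp_R: "sobolev 1 (\<lambda>x. exp (\<i> * complex_of_real (l * R x)))"
proof (rule sobolev_1_of_C1)
  show "((\<lambda>x. exp (\<i> * complex_of_real (l * R x))) has_vector_derivative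
      \<i> * complex_of_real (l * R' x) * exp (\<i> * complex_of_real (l * R x))) (at x)" for x
    by (rule has_vector_derivative_exp_phase[OF has_real_derivative_R])
  show "continuous_on UNIV (\<lambda>x. \<i> * complex_of_real (l * R' x) * exp (\<i> * complex_of_real (l * R x)))"
    by (intro continuous_intros continuous_on_R' continuous_on_R)
  show "periodic1 (\<lambda>x. exp (\<i> * complex_of_real (l * R x)))"
    using periodic1_R by (simp add: periodic1_def)
qed

lemma not_sobolev_2_exp_R: "l \<noteq> 0 \<Longrightarrow> \<not> sobolev 2 (\<lambda>x. exp (\<i> * complex_of_real (l * R x)))"
  using not_summable_on_freq_sq_fcoeff_R'
    summable_on_freq_sq_fcoeff_deriv_if_sobolev2_exp[OF has_real_derivative_R continuous_on_R' periodic1_R abs_R'_le]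
  by blast

end

lemma liouville_denominators_exist:
  assumes "\<alpha> \<notin> \<rat>" "liouvillean \<alpha>"
  obtains q where "liouville_denominators \<alpha> q"
proof -
  define P where "P j n \<longleftrightarrow> 2 ^ Suc j \<le> n \<and> (\<exists>p::int. \<bar>\<alpha> * real n + of_int p\<bar> < 1 / real n ^ j)"
    for j n :: nat
  have larger: "\<exists>n. P j n \<and> m < n" for j m
  proof -
    obtain n p where "max m (2 ^ Suc j) < n" "\<bar>\<alpha> * real n + of_int p\<bar> < 1 / real n ^ j"
      using liouvillean_approximation[OF assms] .
    then show ?thesis unfolding P_def by (intro exI[of _ n]) auto
  qed
  obtain q where "\<forall>j. P j (q j) \<and> q j < q (Suc j)"
    using dependent_nat_choice[of P "\<lambda>_ m n. m < n"] larger by blast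
  then have "liouville_denominators \<alpha> q"
    by unfold_locales (auto simp: P_def intro: strict_monoI_Suc)
  then show ?thesis by (rule that)
qed

theorem lemma5p3:
  fixes \<alpha> :: real
  assumes "\<alpha> \<notin> \<rat>" and "liouvillean \<alpha>"
  shows "\<exists>Q R :: real \<Rightarrow> real.
           smooth_circle Q \<and> mean_zero Q \<and>
           R \<in> borel_measurable lborel \<and>
           (\<forall>\<xi>. R (\<xi> + \<alpha>) - R \<xi> = Q \<xi>) \<and>
           sobolev 1 (\<lambda>\<xi>. complex_of_real (R \<xi>)) \<and>
           \<not> sobolev 2 (\<lambda>\<xi>. complex_of_real (R \<xi>)) \<and>
           (\<forall>l::real. l \<noteq> 0 \<longrightarrow>
              sobolev 1 (\<lambda>\<xi>. exp (\<i> * complex_of_real (l * R \<xi>))) \<and>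
              \<not> sobolev 2 (\<lambda>\<xi>. exp (\<i> * complex_of_real (l * R \<xi>))))"
proof -
  obtain q where "liouville_denominators \<alpha> q"
    using liouville_denominators_exist[OF assms] .
  then interpret liouville_denominators \<alpha> q .
  have "R \<in> borel_measurable lborel"
    using borel_measurable_continuous_onI[OF continuous_on_R] by simp
  then show ?thesis
    using smooth_circle_Q mean_zero_Q Q_0 sobolev_1_R not_sobolev_2_R
      sobolev_1_exp_R not_sobolev_2_exp_R
    by (intro exI[of _ "Q 0"] exI[of _ R]) auto
qed

end
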